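(* Let $(X,d)$ be a doubling proper metric space and $(\varepsilon_k)$ a sequence of positive reals tending to $0$. Let $A\subset X$ be such that for each $x\in A$ there is a completely parametrized rectifiable curve $\gamma:(\mathbb R,0)\to(X,x)$ with $\sup_{0<|h|\le1/k}\left|\frac{d(\gamma(h),\gamma(-h))}{2|h|}-1\right|\le\varepsilon_k$ for all $k$. Let $x_0$ be a $t$-density point of $A$, let $r_n\to0$ be positive, and suppose $(X,x_0,d/r_n)$ converges in the pointed Gromov–Hausdorff topology to $(Z,z_0)$. Then every point of $Z$ lies on a bi-infinite geodesic $\gamma:\mathbb R\to Z$ (i.e. $d(\gamma(s),\gamma(t))=|s-t|$ for all $s,t$) which is a locally uniform limit of rescalings $t\mapsto\hat\gamma_n(r_nt)$ of such completely parametrized curves $\hat\gamma_n$ passing through points of $A$.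
   Context: Complete parametrization: given a rectifiable curve $\gamma:[0,\ell]\to X$ parametrized by arclength and $t_0\in[0,\ell]$, its complete parametrization at $t_0$ is $\gamma^0:\mathbb R\to X$ with $\gamma^0(t)=\gamma(t+t_0)$ on $[-t_0,\ell-t_0]$, constant equal to $\gamma(0)$ on $(-\infty,-t_0]$ and to $\gamma(\ell)$ on $[\ell-t_0,\infty)$. A point $a\in A$ is a $t$-density point of $A$ if for every $\varepsilon>0$, $\lim_{r\to0}\frac1r\sup_{z\in B(a,r)}d(z,A\cap B(a,(1+\varepsilon)r))=0$. Convergence of curves is uniform convergence on compact subsets of $\mathbb R$, in a common space into which the rescaled balls isometrically embed. *)

theory Defs
  imports "HOL-Analysis.Analysis"
begin

definition proper_mspace :: "'a set \<Rightarrow> ('a \<Rightarrow> 'a \<Rightarrow> real) \<Rightarrow> bool" where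
  "proper_mspace M d \<longleftrightarrow> Metric_space M d \<and>
     (\<forall>x\<in>M. \<forall>R. compactin (Metric_space.mtopology M d) (Metric_space.mcball M d x R))"

definition doubling_mspace :: "'a set \<Rightarrow> ('a \<Rightarrow> 'a \<Rightarrow> real) \<Rightarrow> bool" where
  "doubling_mspace M d \<longleftrightarrow> Metric_space M d \<and>
     (\<exists>N::nat. \<forall>x\<in>M. \<forall>R>0. \<exists>F. finite F \<and> card F \<le> N \<and> F \<subseteq> M \<and>
        Metric_space.mball M d x R \<subseteq> (\<Union>y\<in>F. Metric_space.mball M d y (R/2)))"

definition curve_length :: "('a \<Rightarrow> 'a \<Rightarrow> real) \<Rightarrow> (real \<Rightarrow> 'a) \<Rightarrow> real \<Rightarrow> real \<Rightarrow> ereal" where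
  "curve_length d \<gamma> a b =
     (SUP p \<in> {(n, t). t 0 = a \<and> t n = b \<and> (\<forall>i<n. t i \<le> t (Suc i))}.
        ereal (\<Sum>i<fst p. d (\<gamma> (snd p i)) (\<gamma> (snd p (Suc i)))))"

definition arclength_curve :: "'a set \<Rightarrow> ('a \<Rightarrow> 'a \<Rightarrow> real) \<Rightarrow> (real \<Rightarrow> 'a) \<Rightarrow> real \<Rightarrow> bool" where
  "arclength_curve M d \<gamma> l \<longleftrightarrow> 0 \<le> l \<and> \<gamma> ` {0..l} \<subseteq> M \<and>
     (\<forall>a b. 0 \<le> a \<and> a \<le> b \<and> b \<le> l \<longrightarrow> curve_length d \<gamma> a b = ereal (b - a))"

definition complete_param :: "(real \<Rightarrow> 'a) \<Rightarrow> real \<Rightarrow> real \<Rightarrow> real \<Rightarrow> 'a" where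
  "complete_param \<gamma> l t0 =
     (\<lambda>t. if t \<le> - t0 then \<gamma> 0 else if l - t0 \<le> t then \<gamma> l else \<gamma> (t + t0))"

definition complete_curve_at :: "'a set \<Rightarrow> ('a \<Rightarrow> 'a \<Rightarrow> real) \<Rightarrow> 'a \<Rightarrow> (real \<Rightarrow> 'a) \<Rightarrow> bool" where
  "complete_curve_at M d x \<Gamma> \<longleftrightarrow>
     (\<exists>\<gamma> l t0. arclength_curve M d \<gamma> l \<and> 0 \<le> t0 \<and> t0 \<le> l \<and>
        \<Gamma> = complete_param \<gamma> l t0) \<and> \<Gamma> 0 = x"

definition good_curve_at :: "'a set \<Rightarrow> ('a \<Rightarrow> 'a \<Rightarrow> real) \<Rightarrow> (nat \<Rightarrow> real) \<Rightarrow> 'a \<Rightarrow> (real \<Rightarrow> 'a) \<Rightarrow> bool" where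
  "good_curve_at M d \<epsilon> x \<Gamma> \<longleftrightarrow> complete_curve_at M d x \<Gamma> \<and>
     (\<forall>k::nat. k \<ge> 1 \<longrightarrow>
        (\<forall>h::real. 0 < \<bar>h\<bar> \<and> \<bar>h\<bar> \<le> 1 / real k \<longrightarrow>
           \<bar>d (\<Gamma> h) (\<Gamma> (-h)) / (2 * \<bar>h\<bar>) - 1\<bar> \<le> \<epsilon> k))"

definition pt_set_dist :: "('a \<Rightarrow> 'a \<Rightarrow> real) \<Rightarrow> 'a \<Rightarrow> 'a set \<Rightarrow> real" where
  "pt_set_dist d z S = Inf (d z ` S)"

definition t_density_point :: "'a set \<Rightarrow> ('a \<Rightarrow> 'a \<Rightarrow> real) \<Rightarrow> 'a set \<Rightarrow> 'a \<Rightarrow> bool" where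
  "t_density_point M d A a \<longleftrightarrow> a \<in> A \<and>
     (\<forall>\<epsilon>>0. ((\<lambda>r. (1 / r) * Sup ((\<lambda>z. pt_set_dist d z (A \<inter> Metric_space.mball M d a ((1 + \<epsilon>) * r)))
                                   ` Metric_space.mball M d a r)) \<longlongrightarrow> 0) (at_right 0))"

definition isometric_embedding :: "'a set \<Rightarrow> ('a \<Rightarrow> 'a \<Rightarrow> real) \<Rightarrow> 'c set \<Rightarrow> ('c \<Rightarrow> 'c \<Rightarrow> real) \<Rightarrow> ('a \<Rightarrow> 'c) \<Rightarrow> bool" where
  "isometric_embedding M d W dW f \<longleftrightarrow> f ` M \<subseteq> W \<and> (\<forall>x\<in>M. \<forall>y\<in>M. dW (f x) (f y) = d x y)"

text \<open>A realization of the pointed Gromov-Hausdorff convergence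
  (X_n, p_n, d_n) -> (Z, z0, dZ) (with Z proper) inside a common metric space (W,dW):
  isometric embeddings f n of X_n and g of Z into W such that the base points converge and,
  for every R and e>0, eventually the R-balls around the base points lie in the
  e-neighbourhood of the other space.\<close>
definition pGH_realization ::
  "'a set \<Rightarrow> (nat \<Rightarrow> 'a \<Rightarrow> 'a \<Rightarrow> real) \<Rightarrow> (nat \<Rightarrow> 'a) \<Rightarrow> 'b set \<Rightarrow> ('b \<Rightarrow> 'b \<Rightarrow> real) \<Rightarrow> 'b
   \<Rightarrow> 'c set \<Rightarrow> ('c \<Rightarrow> 'c \<Rightarrow> real) \<Rightarrow> (nat \<Rightarrow> 'a \<Rightarrow> 'c) \<Rightarrow> ('b \<Rightarrow> 'c) \<Rightarrow> bool" where
  "pGH_realization X dn p Z dZ z0 W dW f g \<longleftrightarrow>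
     Metric_space W dW \<and> proper_mspace Z dZ \<and> z0 \<in> Z \<and>
     (\<forall>n. Metric_space X (dn n) \<and> p n \<in> X \<and> isometric_embedding X (dn n) W dW (f n)) \<and>
     isometric_embedding Z dZ W dW g \<and>
     (\<lambda>n. dW (f n (p n)) (g z0)) \<longlonglongrightarrow> 0 \<and>
     (\<forall>R e. e > 0 \<longrightarrow> (\<forall>\<^sub>F n in sequentially.
        (\<forall>x\<in>Metric_space.mcball X (dn n) (p n) R. \<exists>z\<in>Z. dW (f n x) (g z) < e) \<and>
        (\<forall>z\<in>Metric_space.mcball Z dZ z0 R. \<exists>x\<in>X. dW (f n x) (g z) < e)))"

end

theory Submission
  imports Defs "HOL-Library.Diagonal_Subsequence"
begin

text \<open>
  Fix \<open>z \<in> Z\<close>. For each \<open>j\<close> choose a scale \<open>r\<^sub>n\<close> so small that the rescaled space is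
  \<open>1/(j+1)\<close>-close to \<open>Z\<close> on balls of radius about \<open>j\<close>; pick \<open>x \<in> X\<close> whose image lies near \<open>z\<close>,
  and by the t-density of \<open>x\<^sub>0\<close> a point of \<open>A\<close> near \<open>x\<close>, carrying a good curve \<open>\<Gamma>\<close>.
  The rescaled curves \<open>t \<mapsto> \<Gamma>(r\<^sub>n t)\<close> are 1-Lipschitz, stay near the image of \<open>Z\<close> on \<open>[-j, j]\<close>
  and almost double the distance between \<open>t\<close> and \<open>-t\<close>. Shadowing them by points of \<open>Z\<close> and using
  properness of \<open>Z\<close> (a diagonal subsequence over the rationals) yields a locally uniform limit
  \<open>\<gamma>\<close> through \<open>z\<close> which is 1-Lipschitz with \<open>d(\<gamma> t, \<gamma> (-t)) \<ge> 2|t|\<close>; the triangle inequality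
  through \<open>\<gamma>(\<plusminus>T)\<close> then forces \<open>d(\<gamma> s, \<gamma> t) = |s - t|\<close>.
\<close>

lemma arclength_curve_dist_le:
  assumes "arclength_curve M d \<gamma> l" "0 \<le> a" "a \<le> b" "b \<le> l"
  shows "d (\<gamma> a) (\<gamma> b) \<le> b - a"
proof -
  let ?p = "(1::nat, \<lambda>i::nat. if i = 0 then a else b)"
  have "?p \<in> {(n, t). t 0 = a \<and> t n = b \<and> (\<forall>i<n. t i \<le> t (Suc i))}"
    using assms by auto
  then have "ereal (d (\<gamma> a) (\<gamma> b)) \<le> curve_length d \<gamma> a b"
    unfolding curve_length_def by (rule SUP_upper2) simp
  also have "\<dots> = ereal (b - a)"
    using assms unfolding arclength_curve_def by auto
  finally show ?thesis by simp
qed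

lemma complete_curve_at_lipschitz:
  assumes "Metric_space M d" "complete_curve_at M d x \<Gamma>"
  shows "\<Gamma> u \<in> M" and "d (\<Gamma> u) (\<Gamma> v) \<le> \<bar>u - v\<bar>"
proof -
  interpret Metric_space M d by fact
  obtain \<gamma> l t0 where \<gamma>: "arclength_curve M d \<gamma> l" and t0: "0 \<le> t0" "t0 \<le> l"
    and \<Gamma>: "\<Gamma> = complete_param \<gamma> l t0"
    using assms(2) unfolding complete_curve_at_def by blast
  define c where "c u = max 0 (min l (u + t0))" for u
  have \<Gamma>_eq: "\<Gamma> u = \<gamma> (c u)" and c: "0 \<le> c u" "c u \<le> l" for u
    using t0 unfolding \<Gamma> complete_param_def c_def by auto
  have \<gamma>_lip: "d (\<gamma> s) (\<gamma> s') \<le> \<bar>s - s'\<bar>" if "0 \<le> s" "s \<le> l" "0 \<le> s'" "s' \<le> l" for s s'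
    using arclength_curve_dist_le[OF \<gamma>, of s s'] arclength_curve_dist_le[OF \<gamma>, of s' s] that commute
    by (cases "s \<le> s'") auto
  have "\<bar>c u - c v\<bar> \<le> \<bar>u - v\<bar>"
    unfolding c_def by auto
  then show "d (\<Gamma> u) (\<Gamma> v) \<le> \<bar>u - v\<bar>"
    using \<gamma>_lip[OF c[of u] c[of v]] unfolding \<Gamma>_eq by linarith
  show "\<Gamma> u \<in> M"
    using \<gamma> c unfolding \<Gamma>_eq arclength_curve_def by auto
qed

lemma good_curve_at_expansion:
  assumes "good_curve_at M d \<epsilon> x \<Gamma>" "k \<ge> 1" "0 < \<bar>h\<bar>" "\<bar>h\<bar> \<le> 1 / real k"
  shows "2 * \<bar>h\<bar> * (1 - \<epsilon> k) \<le> d (\<Gamma> h) (\<Gamma> (-h))"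
proof -
  have "\<bar>d (\<Gamma> h) (\<Gamma> (-h)) / (2 * \<bar>h\<bar>) - 1\<bar> \<le> \<epsilon> k"
    using assms unfolding good_curve_at_def by auto
  with \<open>0 < \<bar>h\<bar>\<close> show ?thesis
    by (simp add: field_simps abs_le_iff)
qed

lemma t_density_point_approx:
  assumes "Metric_space M d" "t_density_point M d A a" "A \<subseteq> M" "\<delta> > 0"
  shows "\<forall>\<^sub>F \<rho> in at_right 0. \<forall>x\<in>M. d x a < \<rho> \<longrightarrow> (\<exists>b\<in>A. d x b < \<delta> * \<rho>)"
proof -
  interpret Metric_space M d by fact
  have aA: "a \<in> A"
    using assms(2) unfolding t_density_point_def by (rule conjunct1)
  then have aM: "a \<in> M"
    using assms(3) by blast
  define S where "S \<rho> = A \<inter> mball a ((1 + 1) * \<rho>)" for \<rho>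
  have "\<forall>\<epsilon>>0. ((\<lambda>\<rho>. (1 / \<rho>) * Sup ((\<lambda>x. pt_set_dist d x (A \<inter> mball a ((1 + \<epsilon>) * \<rho>))) ` mball a \<rho>))
           \<longlongrightarrow> 0) (at_right 0)"
    using assms(2) unfolding t_density_point_def by (rule conjunct2)
  from this[rule_format, OF zero_less_one]
  have "((\<lambda>\<rho>. (1 / \<rho>) * Sup ((\<lambda>x. pt_set_dist d x (S \<rho>)) ` mball a \<rho>)) \<longlongrightarrow> 0) (at_right 0)"
    unfolding S_def .
  from tendstoD[OF this \<open>\<delta> > 0\<close>] eventually_at_right_less[of 0]
  have "\<forall>\<^sub>F \<rho> in at_right 0. 0 < \<rho> \<and> Sup ((\<lambda>x. pt_set_dist d x (S \<rho>)) ` mball a \<rho>) < \<delta> * \<rho>"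
    by eventually_elim (simp add: field_simps abs_less_iff)
  then show ?thesis
  proof (rule eventually_mono, intro ballI impI)
    fix \<rho> x
    assume \<rho>: "0 < \<rho> \<and> Sup ((\<lambda>x. pt_set_dist d x (S \<rho>)) ` mball a \<rho>) < \<delta> * \<rho>"
      and x: "x \<in> M" "d x a < \<rho>"
    have aS: "a \<in> S \<rho>"
      using aA aM \<rho> unfolding S_def by simp
    have le: "pt_set_dist d y (S \<rho>) \<le> d y a" for y
      unfolding pt_set_dist_def by (rule cInf_lower) (use aS in \<open>auto intro!: bdd_belowI[of _ 0]\<close>)
    have "pt_set_dist d y (S \<rho>) \<le> \<rho>" if "y \<in> mball a \<rho>" for y
      using le[of y] that commute[of y a] by simp
    then have "bdd_above ((\<lambda>y. pt_set_dist d y (S \<rho>)) ` mball a \<rho>)"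
      by (rule bdd_aboveI2)
    moreover have "x \<in> mball a \<rho>"
      using x aM commute[of x a] by simp
    ultimately have "pt_set_dist d x (S \<rho>) \<le> Sup ((\<lambda>y. pt_set_dist d y (S \<rho>)) ` mball a \<rho>)"
      by (intro cSup_upper imageI)
    with \<rho> have "Inf (d x ` S \<rho>) < \<delta> * \<rho>"
      unfolding pt_set_dist_def by linarith
    moreover have "d x ` S \<rho> \<noteq> {}"
      using aS by blast
    ultimately have "\<exists>y\<in>d x ` S \<rho>. y < \<delta> * \<rho>"
      by (rule cInf_lessD[rotated])
    then obtain b where "b \<in> S \<rho>" "d x b < \<delta> * \<rho>"
      by blast
    then show "\<exists>b\<in>A. d x b < \<delta> * \<rho>"
      unfolding S_def by blast
  qed
qed

lemma t_density_point_eventually_at_scales: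
  assumes "Metric_space M d" "t_density_point M d A a" "A \<subseteq> M"
    and r_pos: "\<And>n. r n > 0" and r: "r \<longlonglongrightarrow> 0" and "c > 0" "e > 0"
  shows "\<forall>\<^sub>F n in sequentially. \<forall>x\<in>M. d x a < c * r n \<longrightarrow> (\<exists>b\<in>A. d x b < e * r n)"
proof -
  have "filterlim (\<lambda>n. c * r n) (at_right 0) sequentially"
    using r_pos \<open>c > 0\<close> by (intro tendsto_imp_filterlim_at_right tendsto_mult_right_zero r) auto
  with t_density_point_approx[OF assms(1-3) divide_pos_pos[OF \<open>e > 0\<close> \<open>c > 0\<close>]]
  have "\<forall>\<^sub>F n in sequentially. \<forall>x\<in>M. d x a < c * r n \<longrightarrow> (\<exists>b\<in>A. d x b < e / c * (c * r n))"
    by (rule eventually_compose_filterlim)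
  then show ?thesis
    using \<open>c > 0\<close> by simp
qed

lemma strict_mono_diagonal_eventually:
  fixes P :: "nat \<Rightarrow> nat \<Rightarrow> bool"
  assumes "\<And>j. \<forall>\<^sub>F n in sequentially. P n j"
  shows "\<exists>\<phi>. strict_mono \<phi> \<and> (\<forall>j. P (\<phi> j) j)"
proof -
  obtain N where N: "\<And>j n. n \<ge> N j \<Longrightarrow> P n j"
    using assms unfolding eventually_sequentially by metis
  define \<phi> where "\<phi> j = (\<Sum>i\<le>j. N i) + j" for j
  have "strict_mono \<phi>"
    unfolding strict_mono_Suc_iff \<phi>_def by simp
  moreover have "N j \<le> \<phi> j" for j
    unfolding \<phi>_def using member_le_sum[of j "{..j}" N] by simp
  ultimately show ?thesis
    using N by blast
qed

lemma (in Metric_space) limitin_mdist_tendsto: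
  assumes "limitin mtopology \<sigma> a F" "limitin mtopology \<tau> b F"
  shows "((\<lambda>i. d (\<sigma> i) (\<tau> i)) \<longlongrightarrow> d a b) F"
proof -
  have a: "a \<in> M" "\<forall>\<^sub>F i in F. \<sigma> i \<in> M" "((\<lambda>i. d (\<sigma> i) a) \<longlongrightarrow> 0) F"
    and b: "b \<in> M" "\<forall>\<^sub>F i in F. \<tau> i \<in> M" "((\<lambda>i. d (\<tau> i) b) \<longlongrightarrow> 0) F"
    using assms limitin_metric_dist_null by auto
  have "\<forall>\<^sub>F i in F. norm (d (\<sigma> i) (\<tau> i) - d a b) \<le> d (\<sigma> i) a + d (\<tau> i) b"
    using a(2) b(2)
  proof eventually_elim
    case (elim i)
    show ?case
      using triangle[of "\<sigma> i" a "\<tau> i"] triangle[of a b "\<tau> i"] triangle[of a "\<sigma> i" b]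
        triangle[of "\<sigma> i" "\<tau> i" b] commute[of b "\<tau> i"] commute[of a "\<sigma> i"] elim a(1) b(1)
      by auto
  qed
  moreover have "((\<lambda>i. d (\<sigma> i) a + d (\<tau> i) b) \<longlongrightarrow> 0) F"
    using tendsto_add[OF a(3) b(3)] by simp
  ultimately have "((\<lambda>i. d (\<sigma> i) (\<tau> i) - d a b) \<longlongrightarrow> 0) F"
    by (rule Lim_null_comparison)
  then show ?thesis
    by (simp add: LIM_zero_cancel)
qed

lemma countable_diagonal_limitin_subseq:
  fixes x :: "nat \<Rightarrow> 'i \<Rightarrow> 'a"
  assumes "countable Q"
    and "\<And>q (\<sigma> :: nat \<Rightarrow> nat). q \<in> Q \<Longrightarrow> strict_mono \<sigma> \<Longrightarrow>
           \<exists>(\<rho> :: nat \<Rightarrow> nat) L. strict_mono \<rho> \<and> limitin X (\<lambda>i. x (\<sigma> (\<rho> i)) q) L sequentially"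
  shows "\<exists>\<psi>. strict_mono \<psi> \<and> (\<forall>q\<in>Q. \<exists>L. limitin X (\<lambda>i. x (\<psi> i) q) L sequentially)"
proof (cases "Q = {}")
  case True
  then show ?thesis
    by (auto simp: strict_mono_def)
next
  case False
  define q where "q = from_nat_into Q"
  interpret subseqs "\<lambda>n \<sigma>. \<exists>L. limitin X (\<lambda>i. x (\<sigma> i) (q n)) L sequentially"
  proof
    fix n and \<sigma> :: "nat \<Rightarrow> nat"
    assume "strict_mono \<sigma>"
    have "q n \<in> Q"
      unfolding q_def using \<open>Q \<noteq> {}\<close> by (rule from_nat_into)
    from assms(2)[OF this \<open>strict_mono \<sigma>\<close>]
    show "\<exists>\<rho>. strict_mono \<rho> \<and> (\<exists>L. limitin X (\<lambda>i. x ((\<sigma> \<circ> \<rho>) i) (q n)) L sequentially)"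
      by (auto simp: o_def)
  qed
  have diag: "\<exists>L. limitin X (\<lambda>i. x (diagseq i) (q n)) L sequentially" for n
  proof -
    have "\<exists>L. limitin X (\<lambda>i. x ((diagseq \<circ> (+) (Suc n)) i) (q n)) L sequentially"
    proof (rule diagseq_holds)
      fix r s :: "nat \<Rightarrow> nat" and n
      assume "strict_mono r" "\<exists>L. limitin X (\<lambda>i. x (s i) (q n)) L sequentially"
      then obtain L where "limitin X (\<lambda>i. x (s i) (q n)) L sequentially"
        by blast
      from limitin_subsequence[OF \<open>strict_mono r\<close> this]
      show "\<exists>L. limitin X (\<lambda>i. x ((s \<circ> r) i) (q n)) L sequentially"
        by (auto simp: o_def)
    qed
    then show ?thesis
      using limitin_sequentially_offset_rev[where f = "\<lambda>i. x (diagseq i) (q n)" and k = "Suc n"]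
      by (auto simp: o_def add.commute)
  qed
  show ?thesis
  proof (intro exI[of _ diagseq] conjI ballI subseq_diagseq)
    fix p
    assume "p \<in> Q"
    from from_nat_into_surj[OF assms(1) this] obtain n where "q n = p"
      unfolding q_def by blast
    then show "\<exists>L. limitin X (\<lambda>i. x (diagseq i) p) L sequentially"
      using diag[of n] by simp
  qed
qed

lemma proper_mspace_convergent_subseq:
  assumes "proper_mspace Z dZ" "z0 \<in> Z"
    and "\<forall>\<^sub>F i in sequentially. u i \<in> Metric_space.mcball Z dZ z0 R"
  shows "\<exists>\<rho> L. strict_mono \<rho> \<and> limitin (Metric_space.mtopology Z dZ) (\<lambda>i. u (\<rho> i)) L sequentially"
proof -
  interpret Metric_space Z dZ
    using assms(1) unfolding proper_mspace_def by blast
  obtain N where N: "\<And>i. i \<ge> N \<Longrightarrow> u i \<in> mcball z0 R"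
    using assms(3) unfolding eventually_sequentially by blast
  have "range (\<lambda>i. u (i + N)) \<subseteq> mcball z0 R"
    using N by (auto simp del: in_mcball)
  then obtain L r where "strict_mono r" "limitin mtopology ((\<lambda>i. u (i + N)) \<circ> r) L sequentially"
    using assms(1,2) unfolding proper_mspace_def compactin_sequentially by blast
  moreover have "strict_mono (\<lambda>i. r i + N)"
    using \<open>strict_mono r\<close> by (simp add: strict_mono_def)
  ultimately show ?thesis
    by (auto simp: o_def)
qed

lemma (in Metric_space) MCauchy_if_approximable:
  assumes "range u \<subseteq> M"
    and "\<And>\<epsilon>. \<epsilon> > 0 \<Longrightarrow> \<exists>v. MCauchy v \<and> (\<forall>\<^sub>F i in sequentially. d (u i) (v i) < \<epsilon>)"
  shows "MCauchy u"
  unfolding MCauchy_def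
proof (intro conjI allI impI assms(1))
  fix \<epsilon> :: real
  assume "\<epsilon> > 0"
  then obtain v where v: "MCauchy v" and uv: "\<forall>\<^sub>F i in sequentially. d (u i) (v i) < \<epsilon> / 3"
    using assms(2)[of "\<epsilon> / 3"] by auto
  obtain N1 where N1: "\<And>n n'. N1 \<le> n \<Longrightarrow> N1 \<le> n' \<Longrightarrow> d (v n) (v n') < \<epsilon> / 3"
    using v \<open>\<epsilon> > 0\<close> unfolding MCauchy_def by (meson zero_less_divide_iff zero_less_numeral)
  obtain N2 where N2: "\<And>n. N2 \<le> n \<Longrightarrow> d (u n) (v n) < \<epsilon> / 3"
    using uv unfolding eventually_sequentially by blast
  show "\<exists>N. \<forall>n n'. N \<le> n \<longrightarrow> N \<le> n' \<longrightarrow> d (u n) (u n') < \<epsilon>"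
  proof (intro exI allI impI)
    fix n n'
    assume "max N1 N2 \<le> n" "max N1 N2 \<le> n'"
    moreover have "u n \<in> M" "u n' \<in> M" "v n \<in> M" "v n' \<in> M"
      using assms(1) v unfolding MCauchy_def by auto
    ultimately show "d (u n) (u n') < \<epsilon>"
      using N1[of n n'] N2[of n] N2[of n'] triangle[of "u n" "v n" "u n'"] triangle[of "v n" "v n'" "u n'"]
        commute[of "u n'" "v n'"] by auto
  qed
qed

lemma (in Metric_space) MCauchy_if_limits_at_rationals:
  fixes u :: "nat \<Rightarrow> real \<Rightarrow> 'a"
  assumes uM: "\<And>i t. u i t \<in> M"
    and lim: "\<And>q. q \<in> \<rat> \<Longrightarrow> \<exists>L. limitin mtopology (\<lambda>i. u i q) L sequentially"
    and u_lip: "\<And>T. \<forall>\<^sub>F i in sequentially. \<forall>s\<in>{-T..T}. \<forall>t\<in>{-T..T}. d (u i s) (u i t) \<le> \<bar>s - t\<bar> + \<eta> i"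
    and \<eta>: "\<eta> \<longlonglongrightarrow> 0"
  shows "MCauchy (\<lambda>i. u i t)"
proof (rule MCauchy_if_approximable)
  show "range (\<lambda>i. u i t) \<subseteq> M"
    using uM by auto
  fix \<epsilon> :: real
  assume "\<epsilon> > 0"
  then obtain q where q: "q \<in> \<rat>" "\<bar>t - q\<bar> < \<epsilon> / 2"
    using Rats_dense_in_real[of t "t + \<epsilon> / 2"] by auto
  obtain L where "limitin mtopology (\<lambda>i. u i q) L sequentially"
    using lim[OF q(1)] by blast
  then have "MCauchy (\<lambda>i. u i q)"
    by (intro convergent_imp_MCauchy) (use uM in auto)
  moreover have "\<forall>\<^sub>F i in sequentially. d (u i t) (u i q) < \<epsilon>"
    using u_lip[of "max \<bar>t\<bar> \<bar>q\<bar>"] tendstoD[OF \<eta> half_gt_zero[OF \<open>\<epsilon> > 0\<close>]]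
  proof eventually_elim
    case (elim i)
    have "t \<in> {-max \<bar>t\<bar> \<bar>q\<bar>..max \<bar>t\<bar> \<bar>q\<bar>}" "q \<in> {-max \<bar>t\<bar> \<bar>q\<bar>..max \<bar>t\<bar> \<bar>q\<bar>}"
      by auto
    with elim(1) have "d (u i t) (u i q) \<le> \<bar>t - q\<bar> + \<eta> i"
      by blast
    moreover have "\<bar>\<eta> i\<bar> < \<epsilon> / 2"
      using elim(2) by (simp add: dist_real_def)
    ultimately show ?case
      using q(2) by arith
  qed
  ultimately show "\<exists>v. MCauchy v \<and> (\<forall>\<^sub>F i in sequentially. d (u i t) (v i) < \<epsilon>)"
    by blast
qed

lemma (in Metric_space) uniform_limitin_if_approx_lipschitz:
  fixes u :: "nat \<Rightarrow> real \<Rightarrow> 'a"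
  assumes u: "\<And>i t. u i t \<in> M"
    and lim: "\<And>t. limitin mtopology (\<lambda>i. u i t) (\<gamma> t) sequentially"
    and \<gamma>_lip: "\<And>s t. d (\<gamma> s) (\<gamma> t) \<le> \<bar>s - t\<bar>"
    and u_lip: "\<And>T. \<forall>\<^sub>F i in sequentially. \<forall>s\<in>{-T..T}. \<forall>t\<in>{-T..T}. d (u i s) (u i t) \<le> \<bar>s - t\<bar> + \<eta> i"
    and \<eta>: "\<eta> \<longlonglongrightarrow> 0" and "\<epsilon> > 0"
  shows "\<forall>\<^sub>F i in sequentially. \<forall>t\<in>{-T..T}. d (u i t) (\<gamma> t) < \<epsilon>"
proof -
  define h where "h = \<epsilon> / 4"
  have "h > 0"
    using \<open>\<epsilon> > 0\<close> unfolding h_def by simp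
  from compact_eq_totally_bounded[THEN iffD1, OF compact_Icc, THEN conjunct2, rule_format, OF this]
  obtain K where K: "finite K" "{-T..T} \<subseteq> (\<Union>p\<in>K. ball p h)"
    by blast
  have \<gamma>M: "\<gamma> t \<in> M" for t
    using lim[of t] unfolding limitin_metric by (rule conjunct1)
  have "\<forall>\<^sub>F i in sequentially. \<forall>p\<in>K. d (u i p) (\<gamma> p) < h"
  proof (rule eventually_ball_finite[OF K(1)], rule ballI)
    fix p
    have "\<forall>\<epsilon>>0. \<forall>\<^sub>F i in sequentially. u i p \<in> M \<and> d (u i p) (\<gamma> p) < \<epsilon>"
      using lim[of p] unfolding limitin_metric by (rule conjunct2)
    with \<open>h > 0\<close> have "\<forall>\<^sub>F i in sequentially. u i p \<in> M \<and> d (u i p) (\<gamma> p) < h"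
      by blast
    then show "\<forall>\<^sub>F i in sequentially. d (u i p) (\<gamma> p) < h"
      by (rule eventually_mono) (rule conjunct2)
  qed
  moreover have "\<forall>\<^sub>F i in sequentially. \<bar>\<eta> i\<bar> < h"
    using tendstoD[OF \<eta> \<open>h > 0\<close>] by (simp add: dist_real_def)
  ultimately show ?thesis
    using u_lip[of "T + h"]
  proof eventually_elim
    case (elim i)
    show ?case
    proof
      fix t
      assume t: "t \<in> {-T..T}"
      with K(2) have "t \<in> (\<Union>p\<in>K. ball p h)"
        by (rule subsetD)
      then obtain p where "p \<in> K" "t \<in> ball p h"
        by (rule UN_E)
      then have p: "p \<in> K" "\<bar>t - p\<bar> < h"
        by (simp_all add: dist_real_def abs_minus_commute)
      then have "t \<in> {-(T + h)..T + h}" "p \<in> {-(T + h)..T + h}"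
        using t \<open>h > 0\<close> by auto
      then have "d (u i t) (u i p) \<le> \<bar>t - p\<bar> + \<eta> i"
        using elim(3) by (blast dest: bspec)
      moreover have "d (\<gamma> p) (\<gamma> t) \<le> \<bar>t - p\<bar>"
        using \<gamma>_lip[of p t] by (simp add: abs_minus_commute)
      moreover have "d (u i t) (\<gamma> t) \<le> d (u i t) (u i p) + d (u i p) (\<gamma> p) + d (\<gamma> p) (\<gamma> t)"
        using triangle[OF u[of i t] u[of i p] \<gamma>M[of t]] triangle[OF u[of i p] \<gamma>M[of p] \<gamma>M[of t]]
        by linarith
      moreover have "d (u i p) (\<gamma> p) < h" "\<bar>\<eta> i\<bar> < h"
        using elim(1,2) p(1) by auto
      ultimately show "d (u i t) (\<gamma> t) < \<epsilon>"
        using p(2) unfolding h_def by linarith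
    qed
  qed
qed

lemma (in Metric_space) isometry_if_lipschitz_antipodal:
  assumes "\<And>t. \<gamma> t \<in> M"
    and lip: "\<And>s t. d (\<gamma> s) (\<gamma> t) \<le> \<bar>s - t\<bar>"
    and antipodal: "\<And>t. 2 * \<bar>t\<bar> \<le> d (\<gamma> t) (\<gamma> (-t))"
  shows "d (\<gamma> s) (\<gamma> t) = \<bar>s - t\<bar>"
proof -
  have ge: "b - a \<le> d (\<gamma> a) (\<gamma> b)" if "a \<le> b" for a b
  proof -
    define T where "T = max \<bar>a\<bar> \<bar>b\<bar>"
    have "2 * T \<le> d (\<gamma> T) (\<gamma> (-T))"
      using antipodal[of T] unfolding T_def by simp
    also have "\<dots> \<le> d (\<gamma> T) (\<gamma> b) + d (\<gamma> b) (\<gamma> a) + d (\<gamma> a) (\<gamma> (-T))"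
    proof -
      have "d (\<gamma> T) (\<gamma> (-T)) \<le> d (\<gamma> T) (\<gamma> b) + d (\<gamma> b) (\<gamma> (-T))"
        "d (\<gamma> b) (\<gamma> (-T)) \<le> d (\<gamma> b) (\<gamma> a) + d (\<gamma> a) (\<gamma> (-T))"
        by (rule triangle; use assms(1) in simp)+
      then show ?thesis
        by linarith
    qed
    also have "\<dots> \<le> (T - b) + d (\<gamma> a) (\<gamma> b) + (a + T)"
    proof -
      have "\<bar>T - b\<bar> = T - b" "\<bar>a - (-T)\<bar> = a + T"
        unfolding T_def by auto
      then show ?thesis
        using lip[of T b] lip[of a "-T"] commute[of "\<gamma> b" "\<gamma> a"] by linarith
    qed
    finally show ?thesis by simp
  qed
  show ?thesis
  proof (cases "s \<le> t")
    case True
    then show ?thesis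
      using ge[OF True] lip[of s t] by simp
  next
    case False
    then show ?thesis
      using ge[of t s] lip[of s t] commute[of "\<gamma> s" "\<gamma> t"] by simp
  qed
qed

lemma eventually_real_ge_sequentially: "\<forall>\<^sub>F j in sequentially. T \<le> real j"
  using filterlim_real_sequentially unfolding filterlim_at_top by blast

lemma proper_mspace_lipschitz_limit_subseq:
  fixes u :: "nat \<Rightarrow> real \<Rightarrow> 'a"
  assumes proper: "proper_mspace Z dZ" and "z0 \<in> Z"
    and uZ: "\<And>j t. u j t \<in> Z"
    and bounded: "\<And>t. \<exists>R. \<forall>\<^sub>F j in sequentially. dZ z0 (u j t) \<le> R"
    and u_lip: "\<And>T. \<forall>\<^sub>F j in sequentially. \<forall>s\<in>{-T..T}. \<forall>t\<in>{-T..T}. dZ (u j s) (u j t) \<le> \<bar>s - t\<bar> + \<eta> j"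
    and \<eta>: "\<eta> \<longlonglongrightarrow> 0"
  shows "\<exists>\<psi> \<gamma>. strict_mono \<psi> \<and>
           (\<forall>t. limitin (Metric_space.mtopology Z dZ) (\<lambda>i. u (\<psi> i) t) (\<gamma> t) sequentially) \<and>
           (\<forall>s t. dZ (\<gamma> s) (\<gamma> t) \<le> \<bar>s - t\<bar>)"
proof -
  interpret Metric_space Z dZ
    using proper unfolding proper_mspace_def by blast
  have sub: "\<exists>\<rho> L. strict_mono \<rho> \<and> limitin mtopology (\<lambda>i. u (\<sigma> (\<rho> i)) t) L sequentially"
    if "strict_mono \<sigma>" for \<sigma> :: "nat \<Rightarrow> nat" and t
  proof -
    obtain R where "\<forall>\<^sub>F j in sequentially. dZ z0 (u j t) \<le> R"
      using bounded by blast
    from eventually_subseq[OF that this]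
    have "\<forall>\<^sub>F i in sequentially. u (\<sigma> i) t \<in> mcball z0 R"
      using \<open>z0 \<in> Z\<close> uZ by (auto elim: eventually_mono)
    from proper_mspace_convergent_subseq[OF proper \<open>z0 \<in> Z\<close> this] show ?thesis .
  qed
  obtain \<psi> where \<psi>: "strict_mono \<psi>"
    and conv_rat: "\<And>q. q \<in> \<rat> \<Longrightarrow> \<exists>L. limitin mtopology (\<lambda>i. u (\<psi> i) q) L sequentially"
    using countable_diagonal_limitin_subseq[OF countable_rat, where X = mtopology and x = u] sub by blast
  have u_lip_\<psi>: "\<forall>\<^sub>F i in sequentially. \<forall>s\<in>{-T..T}. \<forall>t\<in>{-T..T}.
                    dZ (u (\<psi> i) s) (u (\<psi> i) t) \<le> \<bar>s - t\<bar> + \<eta> (\<psi> i)" for T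
    using eventually_subseq[OF \<psi> u_lip[of T]] .
  have box: "s \<in> {-max \<bar>s\<bar> \<bar>t\<bar>..max \<bar>s\<bar> \<bar>t\<bar>}" "t \<in> {-max \<bar>s\<bar> \<bar>t\<bar>..max \<bar>s\<bar> \<bar>t\<bar>}" for s t :: real
    by auto
  have \<eta>_\<psi>: "(\<lambda>i. \<eta> (\<psi> i)) \<longlonglongrightarrow> 0"
    using LIMSEQ_subseq_LIMSEQ[OF \<eta> \<psi>] by (simp add: o_def)
  have cauchy: "MCauchy (\<lambda>i. u (\<psi> i) t)" for t
    using MCauchy_if_limits_at_rationals[where u = "\<lambda>i. u (\<psi> i)", OF uZ conv_rat u_lip_\<psi> \<eta>_\<psi>] .
  have "\<exists>L. limitin mtopology (\<lambda>i. u (\<psi> i) t) L sequentially" for t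
  proof -
    obtain \<rho> L where "strict_mono \<rho>" "limitin mtopology (\<lambda>i. u (\<psi> (\<rho> i)) t) L sequentially"
      using sub[OF \<psi>] by blast
    with MCauchy_convergent_subsequence[OF cauchy] show ?thesis
      by (auto simp: o_def)
  qed
  then obtain \<gamma> where \<gamma>: "\<And>t. limitin mtopology (\<lambda>i. u (\<psi> i) t) (\<gamma> t) sequentially"
    by metis
  have "dZ (\<gamma> s) (\<gamma> t) \<le> \<bar>s - t\<bar>" for s t
  proof (rule tendsto_le[OF trivial_limit_sequentially _ limitin_mdist_tendsto[OF \<gamma> \<gamma>]])
    show "(\<lambda>i. \<bar>s - t\<bar> + \<eta> (\<psi> i)) \<longlonglongrightarrow> \<bar>s - t\<bar>"
      using tendsto_add[OF tendsto_const \<eta>_\<psi>] by simp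
    show "\<forall>\<^sub>F i in sequentially. dZ (u (\<psi> i) s) (u (\<psi> i) t) \<le> \<bar>s - t\<bar> + \<eta> (\<psi> i)"
      using u_lip_\<psi>[of "max \<bar>s\<bar> \<bar>t\<bar>"] by eventually_elim (use box in blast)
  qed
  with \<psi> \<gamma> show ?thesis
    by blast
qed

lemma proper_mspace_geodesic_limit_subseq:
  fixes u :: "nat \<Rightarrow> real \<Rightarrow> 'a"
  assumes proper: "proper_mspace Z dZ" and "z0 \<in> Z" and uZ: "\<And>j t. u j t \<in> Z"
    and u_bounded: "\<And>j t. \<bar>t\<bar> \<le> real j \<Longrightarrow> dZ z0 (u j t) \<le> B + \<bar>t\<bar>"
    and u_lip: "\<And>j s t. \<bar>s\<bar> \<le> real j \<Longrightarrow> \<bar>t\<bar> \<le> real j \<Longrightarrow> dZ (u j s) (u j t) \<le> \<bar>s - t\<bar> + \<eta> j"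
    and u_antipodal: "\<And>j t. \<bar>t\<bar> \<le> real j \<Longrightarrow> 2 * \<bar>t\<bar> * (1 - e j) - \<eta> j \<le> dZ (u j t) (u j (-t))"
    and e: "e \<longlonglongrightarrow> 0" and \<eta>: "\<eta> \<longlonglongrightarrow> 0"
  shows "\<exists>\<psi> \<gamma>. strict_mono \<psi> \<and>
           (\<forall>t. limitin (Metric_space.mtopology Z dZ) (\<lambda>i. u (\<psi> i) t) (\<gamma> t) sequentially) \<and>
           (\<forall>s t. dZ (\<gamma> s) (\<gamma> t) = \<bar>s - t\<bar>) \<and>
           (\<forall>T \<epsilon>. \<epsilon> > 0 \<longrightarrow> (\<forall>\<^sub>F i in sequentially. \<forall>t\<in>{-T..T}. dZ (u (\<psi> i) t) (\<gamma> t) < \<epsilon>))"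
proof -
  interpret Metric_space Z dZ
    using proper unfolding proper_mspace_def by blast
  have u_lip_eventually: "\<forall>\<^sub>F j in sequentially. \<forall>s\<in>{-T..T}. \<forall>t\<in>{-T..T}.
                            dZ (u j s) (u j t) \<le> \<bar>s - t\<bar> + \<eta> j" for T
    using eventually_real_ge_sequentially[of T]
    by eventually_elim (intro ballI u_lip, auto)
  have "\<exists>R. \<forall>\<^sub>F j in sequentially. dZ z0 (u j t) \<le> R" for t
  proof -
    have "\<forall>\<^sub>F j in sequentially. dZ z0 (u j t) \<le> B + \<bar>t\<bar>"
      using eventually_real_ge_sequentially[of "\<bar>t\<bar>"] by eventually_elim (rule u_bounded)
    then show ?thesis
      by blast
  qed
  then obtain \<psi> \<gamma> where \<psi>: "strict_mono \<psi>"
    and lim: "\<And>t. limitin mtopology (\<lambda>i. u (\<psi> i) t) (\<gamma> t) sequentially"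
    and \<gamma>_lip: "\<And>s t. dZ (\<gamma> s) (\<gamma> t) \<le> \<bar>s - t\<bar>"
    using proper_mspace_lipschitz_limit_subseq[OF proper \<open>z0 \<in> Z\<close> uZ _ u_lip_eventually \<eta>] by metis
  have \<gamma>Z: "\<gamma> t \<in> Z" for t
    using lim[of t] unfolding limitin_metric by (rule conjunct1)
  have \<eta>_\<psi>: "(\<lambda>i. \<eta> (\<psi> i)) \<longlonglongrightarrow> 0" and e_\<psi>: "(\<lambda>i. e (\<psi> i)) \<longlonglongrightarrow> 0"
    using LIMSEQ_subseq_LIMSEQ[OF \<eta> \<psi>] LIMSEQ_subseq_LIMSEQ[OF e \<psi>] by (simp_all add: o_def)
  have "2 * \<bar>t\<bar> \<le> dZ (\<gamma> t) (\<gamma> (-t))" for t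
  proof (rule tendsto_le[OF trivial_limit_sequentially limitin_mdist_tendsto[OF lim lim]])
    have "(\<lambda>i. 2 * \<bar>t\<bar> * (1 - e (\<psi> i)) - \<eta> (\<psi> i)) \<longlonglongrightarrow> 2 * \<bar>t\<bar> * (1 - 0) - 0"
      by (intro tendsto_intros e_\<psi> \<eta>_\<psi>)
    then show "(\<lambda>i. 2 * \<bar>t\<bar> * (1 - e (\<psi> i)) - \<eta> (\<psi> i)) \<longlonglongrightarrow> 2 * \<bar>t\<bar>"
      by simp
    show "\<forall>\<^sub>F i in sequentially. 2 * \<bar>t\<bar> * (1 - e (\<psi> i)) - \<eta> (\<psi> i) \<le> dZ (u (\<psi> i) t) (u (\<psi> i) (-t))"
      using eventually_subseq[OF \<psi> eventually_real_ge_sequentially[of "\<bar>t\<bar>"]]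
      by eventually_elim (rule u_antipodal)
  qed
  then have "dZ (\<gamma> s) (\<gamma> t) = \<bar>s - t\<bar>" for s t
    using isometry_if_lipschitz_antipodal[OF \<gamma>Z \<gamma>_lip] by blast
  moreover have "\<forall>\<^sub>F i in sequentially. \<forall>t\<in>{-T..T}. dZ (u (\<psi> i) t) (\<gamma> t) < \<epsilon>" if "\<epsilon> > 0" for T \<epsilon>
    using uniform_limitin_if_approx_lipschitz[where u = "\<lambda>i. u (\<psi> i)" and T = T,
        OF uZ lim \<gamma>_lip eventually_subseq[OF \<psi> u_lip_eventually] \<eta>_\<psi> that] .
  ultimately show ?thesis
    using \<psi> lim by blast
qed

lemma exists_shadow_in_isometric_image:
  fixes g :: "'b \<Rightarrow> 'c" and y :: "nat \<Rightarrow> real \<Rightarrow> 'c"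
  assumes W: "Metric_space W dW" and g: "isometric_embedding Z dZ W dW g" and "z0 \<in> Z"
    and yW: "\<And>j t. y j t \<in> W"
    and y_near: "\<And>j t. \<bar>t\<bar> \<le> real j \<Longrightarrow> \<exists>z'\<in>Z. dW (y j t) (g z') < \<eta> j \<and> dZ z0 z' \<le> B + \<bar>t\<bar>"
  obtains u where "\<And>j t. u j t \<in> Z"
    and "\<And>j t. \<bar>t\<bar> \<le> real j \<Longrightarrow> dW (y j t) (g (u j t)) < \<eta> j"
    and "\<And>j t. \<bar>t\<bar> \<le> real j \<Longrightarrow> dZ z0 (u j t) \<le> B + \<bar>t\<bar>"
    and "\<And>j s t. \<bar>s\<bar> \<le> real j \<Longrightarrow> \<bar>t\<bar> \<le> real j \<Longrightarrow>
           \<bar>dZ (u j s) (u j t) - dW (y j s) (y j t)\<bar> \<le> 2 * \<eta> j"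
proof -
  interpret W: Metric_space W dW by fact
  have gW: "g x \<in> W" if "x \<in> Z" for x
    using g that unfolding isometric_embedding_def by auto
  have gd: "dW (g x) (g x') = dZ x x'" if "x \<in> Z" "x' \<in> Z" for x x'
    using g that unfolding isometric_embedding_def by auto
  have "\<forall>j t. \<exists>z'. z' \<in> Z \<and> (\<bar>t\<bar> \<le> real j \<longrightarrow> dW (y j t) (g z') < \<eta> j \<and> dZ z0 z' \<le> B + \<bar>t\<bar>)"
    using y_near \<open>z0 \<in> Z\<close> by metis
  then obtain u where uZ: "\<And>j t. u j t \<in> Z"
    and u: "\<And>j t. \<bar>t\<bar> \<le> real j \<Longrightarrow> dW (y j t) (g (u j t)) < \<eta> j \<and> dZ z0 (u j t) \<le> B + \<bar>t\<bar>"
    by metis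
  have "\<bar>dZ (u j s) (u j t) - dW (y j s) (y j t)\<bar> \<le> 2 * \<eta> j"
    if "\<bar>s\<bar> \<le> real j" "\<bar>t\<bar> \<le> real j" for j s t
  proof -
    have "\<bar>dW (g (u j s)) (g (u j t)) - dW (y j s) (y j t)\<bar> \<le> dW (y j s) (g (u j s)) + dW (y j t) (g (u j t))"
      using W.triangle[of "g (u j s)" "y j s" "g (u j t)"] W.triangle[of "y j s" "y j t" "g (u j t)"]
        W.triangle[of "y j s" "g (u j s)" "y j t"] W.triangle[of "g (u j s)" "g (u j t)" "y j t"]
        W.commute[of "y j s" "g (u j s)"] W.commute[of "y j t" "g (u j t)"] gW[OF uZ] yW
      by (auto simp: abs_le_iff)
    then show ?thesis
      using u[OF that(1)] u[OF that(2)] gd[OF uZ[of j s] uZ[of j t]] by linarith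
  qed
  with that uZ u show ?thesis
    by blast
qed

lemma geodesic_limit_of_curves_near_isometric_image:
  fixes g :: "'b \<Rightarrow> 'c" and y :: "nat \<Rightarrow> real \<Rightarrow> 'c"
  assumes proper: "proper_mspace Z dZ" and W: "Metric_space W dW"
    and g: "isometric_embedding Z dZ W dW g" and "z0 \<in> Z" and "z \<in> Z"
    and yW: "\<And>j t. y j t \<in> W"
    and y_lip: "\<And>j s t. dW (y j s) (y j t) \<le> \<bar>s - t\<bar>"
    and y_near: "\<And>j t. \<bar>t\<bar> \<le> real j \<Longrightarrow> \<exists>z'\<in>Z. dW (y j t) (g z') < \<eta> j \<and> dZ z0 z' \<le> B + \<bar>t\<bar>"
    and y_antipodal: "\<And>j t. \<bar>t\<bar> \<le> real j \<Longrightarrow> 2 * \<bar>t\<bar> * (1 - e j) \<le> dW (y j t) (y j (-t))"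
    and y_start: "\<And>j. dW (y j 0) (g z) < \<eta> j"
    and e: "e \<longlonglongrightarrow> 0" and \<eta>: "\<eta> \<longlonglongrightarrow> 0"
  shows "\<exists>\<gamma> \<psi>. strict_mono \<psi> \<and> range \<gamma> \<subseteq> Z \<and> \<gamma> 0 = z \<and> (\<forall>s t. dZ (\<gamma> s) (\<gamma> t) = \<bar>s - t\<bar>) \<and>
           (\<forall>T \<epsilon>. \<epsilon> > 0 \<longrightarrow> (\<forall>\<^sub>F i in sequentially. \<forall>t\<in>{-T..T}. dW (y (\<psi> i) t) (g (\<gamma> t)) < \<epsilon>))"
proof -
  interpret Z: Metric_space Z dZ
    using proper unfolding proper_mspace_def by blast
  interpret W: Metric_space W dW by fact
  have gW: "g x \<in> W" if "x \<in> Z" for x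
    using g that unfolding isometric_embedding_def by auto
  have gd: "dW (g x) (g x') = dZ x x'" if "x \<in> Z" "x' \<in> Z" for x x'
    using g that unfolding isometric_embedding_def by auto
  obtain u where uZ: "\<And>j t. u j t \<in> Z"
    and u_near: "\<And>j t. \<bar>t\<bar> \<le> real j \<Longrightarrow> dW (y j t) (g (u j t)) < \<eta> j"
    and u_bounded: "\<And>j t. \<bar>t\<bar> \<le> real j \<Longrightarrow> dZ z0 (u j t) \<le> B + \<bar>t\<bar>"
    and u_dist: "\<And>j s t. \<bar>s\<bar> \<le> real j \<Longrightarrow> \<bar>t\<bar> \<le> real j \<Longrightarrow>
                   \<bar>dZ (u j s) (u j t) - dW (y j s) (y j t)\<bar> \<le> 2 * \<eta> j"
    using exists_shadow_in_isometric_image[OF W g \<open>z0 \<in> Z\<close>, where y = y and \<eta> = \<eta> and B = B]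
      yW y_near by blast
  have u_lip: "dZ (u j s) (u j t) \<le> \<bar>s - t\<bar> + 2 * \<eta> j" if "\<bar>s\<bar> \<le> real j" "\<bar>t\<bar> \<le> real j" for j s t
    using u_dist[OF that] y_lip[of j s t] by linarith
  have u_antipodal: "2 * \<bar>t\<bar> * (1 - e j) - 2 * \<eta> j \<le> dZ (u j t) (u j (-t))" if "\<bar>t\<bar> \<le> real j" for j t
  proof -
    have "\<bar>-t\<bar> \<le> real j"
      using that by simp
    from u_dist[OF that this] y_antipodal[OF that] show ?thesis
      by (simp add: abs_le_iff)
  qed
  have "(\<lambda>j. 2 * \<eta> j) \<longlonglongrightarrow> 0"
    using tendsto_mult_right_zero[OF \<eta>] .
  from proper_mspace_geodesic_limit_subseq[OF proper \<open>z0 \<in> Z\<close> uZ u_bounded u_lip u_antipodal e this]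
  obtain \<psi> \<gamma> where \<psi>: "strict_mono \<psi>"
    and lim: "\<And>t. limitin Z.mtopology (\<lambda>i. u (\<psi> i) t) (\<gamma> t) sequentially"
    and geodesic: "\<And>s t. dZ (\<gamma> s) (\<gamma> t) = \<bar>s - t\<bar>"
    and uniform: "\<And>T \<epsilon>. \<epsilon> > 0 \<Longrightarrow> \<forall>\<^sub>F i in sequentially. \<forall>t\<in>{-T..T}. dZ (u (\<psi> i) t) (\<gamma> t) < \<epsilon>"
    by blast
  have \<gamma>Z: "\<gamma> t \<in> Z" for t
    using lim[of t] unfolding Z.limitin_metric by (rule conjunct1)
  have large: "\<forall>\<^sub>F i in sequentially. T \<le> real (\<psi> i)" for T
    using eventually_subseq[OF \<psi> eventually_real_ge_sequentially] .
  have \<eta>_\<psi>: "(\<lambda>i. \<eta> (\<psi> i)) \<longlonglongrightarrow> 0"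
    using LIMSEQ_subseq_LIMSEQ[OF \<eta> \<psi>] by (simp add: o_def)
  have "limitin Z.mtopology (\<lambda>i. u (\<psi> i) 0) z sequentially"
    unfolding Z.limitin_metric
  proof (intro conjI allI impI \<open>z \<in> Z\<close>)
    fix \<epsilon> :: real
    assume "\<epsilon> > 0"
    from tendstoD[OF \<eta>_\<psi> half_gt_zero[OF this]]
    show "\<forall>\<^sub>F i in sequentially. u (\<psi> i) 0 \<in> Z \<and> dZ (u (\<psi> i) 0) z < \<epsilon>"
    proof eventually_elim
      case (elim i)
      have "dZ (u (\<psi> i) 0) z \<le> dW (g (u (\<psi> i) 0)) (y (\<psi> i) 0) + dW (y (\<psi> i) 0) (g z)"
        using W.triangle[OF gW[OF uZ[of "\<psi> i" 0]] yW[of "\<psi> i" 0] gW[OF \<open>z \<in> Z\<close>]]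
          gd[OF uZ[of "\<psi> i" 0] \<open>z \<in> Z\<close>] by simp
      moreover have "dW (g (u (\<psi> i) 0)) (y (\<psi> i) 0) < \<eta> (\<psi> i)"
        using u_near[of 0 "\<psi> i"] W.commute[of "g (u (\<psi> i) 0)" "y (\<psi> i) 0"] by simp
      ultimately show ?case
        using y_start[of "\<psi> i"] elim uZ by (simp add: dist_real_def)
    qed
  qed
  then have "\<gamma> 0 = z"
    using Z.limitin_metric_unique[OF lim] by simp
  moreover have "\<forall>\<^sub>F i in sequentially. \<forall>t\<in>{-T..T}. dW (y (\<psi> i) t) (g (\<gamma> t)) < \<epsilon>" if "\<epsilon> > 0" for T \<epsilon>
    using uniform[of "\<epsilon> / 2" T, OF half_gt_zero[OF that]] tendstoD[OF \<eta>_\<psi> half_gt_zero[OF that]] large[of T]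
  proof eventually_elim
    case (elim i)
    show ?case
    proof
      fix t
      assume "t \<in> {-T..T}"
      then have "dZ (u (\<psi> i) t) (\<gamma> t) < \<epsilon> / 2" "dW (y (\<psi> i) t) (g (u (\<psi> i) t)) < \<eta> (\<psi> i)"
        using elim(1,3) u_near[of t "\<psi> i"] by auto
      moreover have "dW (y (\<psi> i) t) (g (\<gamma> t)) \<le> dW (y (\<psi> i) t) (g (u (\<psi> i) t)) + dW (g (u (\<psi> i) t)) (g (\<gamma> t))"
        using W.triangle[OF yW gW[OF uZ] gW[OF \<gamma>Z]] .
      ultimately show "dW (y (\<psi> i) t) (g (\<gamma> t)) < \<epsilon>"
        using elim(2) gd[OF uZ \<gamma>Z] by (simp add: dist_real_def)
    qed
  qed
  ultimately show ?thesis
    using \<psi> \<gamma>Z geodesic by (intro exI[of _ \<gamma>] exI[of _ \<psi>]) auto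
qed


definition gh_close ::
  "'a set \<Rightarrow> ('a \<Rightarrow> 'a \<Rightarrow> real) \<Rightarrow> 'a \<Rightarrow> 'b set \<Rightarrow> ('b \<Rightarrow> 'b \<Rightarrow> real) \<Rightarrow> 'b
   \<Rightarrow> ('c \<Rightarrow> 'c \<Rightarrow> real) \<Rightarrow> ('a \<Rightarrow> 'c) \<Rightarrow> ('b \<Rightarrow> 'c) \<Rightarrow> real \<Rightarrow> real \<Rightarrow> bool" where
  "gh_close X dX p Z dZ z0 dW f g R e \<longleftrightarrow>
     dW (f p) (g z0) < e \<and>
     (\<forall>x\<in>X. dX p x \<le> R \<longrightarrow> (\<exists>z\<in>Z. dW (f x) (g z) < e)) \<and>
     (\<forall>z\<in>Z. dZ z0 z \<le> R \<longrightarrow> (\<exists>x\<in>X. dW (f x) (g z) < e))"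

lemma gh_closeD:
  assumes "gh_close X dX p Z dZ z0 dW f g R e"
  shows "dW (f p) (g z0) < e"
    and "x \<in> X \<Longrightarrow> dX p x \<le> R \<Longrightarrow> \<exists>z\<in>Z. dW (f x) (g z) < e"
    and "z \<in> Z \<Longrightarrow> dZ z0 z \<le> R \<Longrightarrow> \<exists>x\<in>X. dW (f x) (g z) < e"
  using assms unfolding gh_close_def by auto

lemma pGH_realization_eventually_gh_close:
  assumes "pGH_realization X dn p Z dZ z0 W dW f g" "e > 0"
  shows "\<forall>\<^sub>F n in sequentially. gh_close X (dn n) (p n) Z dZ z0 dW (f n) g R e"
proof -
  have "(\<lambda>n. dW (f n (p n)) (g z0)) \<longlonglongrightarrow> 0"
    using assms(1) unfolding pGH_realization_def by blast
  from tendstoD[OF this \<open>e > 0\<close>]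
  have base: "\<forall>\<^sub>F n in sequentially. dW (f n (p n)) (g z0) < e"
    by eventually_elim (simp add: dist_real_def abs_less_iff)
  have "\<forall>\<^sub>F n in sequentially.
          (\<forall>x\<in>Metric_space.mcball X (dn n) (p n) R. \<exists>z\<in>Z. dW (f n x) (g z) < e) \<and>
          (\<forall>z\<in>Metric_space.mcball Z dZ z0 R. \<exists>x\<in>X. dW (f n x) (g z) < e)"
    using assms unfolding pGH_realization_def by blast
  with base show ?thesis
  proof eventually_elim
    case (elim n)
    have "Metric_space X (dn n)" "p n \<in> X" "Metric_space Z dZ" "z0 \<in> Z"
      using assms(1) unfolding pGH_realization_def proper_mspace_def by auto
    with elim show ?case
      unfolding gh_close_def by (simp add: Metric_space.in_mcball)
  qed
qed

lemma rescaled_curve_lipschitz: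
  assumes "Metric_space X d" "complete_curve_at X d b \<Gamma>"
    and "isometric_embedding X (\<lambda>x y. d x y / \<rho>) W dW F" "\<rho> > 0"
  shows "dW (F (\<Gamma> (\<rho> * s))) (F (\<Gamma> (\<rho> * t))) \<le> \<bar>s - t\<bar>"
proof -
  have "dW (F (\<Gamma> (\<rho> * s))) (F (\<Gamma> (\<rho> * t))) = d (\<Gamma> (\<rho> * s)) (\<Gamma> (\<rho> * t)) / \<rho>"
    using assms(3) complete_curve_at_lipschitz(1)[OF assms(1,2)] unfolding isometric_embedding_def by blast
  also have "\<dots> \<le> \<bar>\<rho> * s - \<rho> * t\<bar> / \<rho>"
    using complete_curve_at_lipschitz(2)[OF assms(1,2)] \<open>\<rho> > 0\<close> by (intro divide_right_mono) auto
  also have "\<dots> = \<bar>s - t\<bar>"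
    using \<open>\<rho> > 0\<close> by (simp add: abs_mult flip: right_diff_distrib)
  finally show ?thesis .
qed

lemma rescaled_curve_antipodal:
  assumes "Metric_space X d" "good_curve_at X d \<epsilon> b \<Gamma>"
    and "isometric_embedding X (\<lambda>x y. d x y / \<rho>) W dW F" "\<rho> > 0"
    and "k \<ge> 1" "\<rho> * \<bar>t\<bar> \<le> 1 / real k"
  shows "2 * \<bar>t\<bar> * (1 - \<epsilon> k) \<le> dW (F (\<Gamma> (\<rho> * t))) (F (\<Gamma> (\<rho> * (-t))))"
proof -
  have "complete_curve_at X d b \<Gamma>"
    using assms(2) unfolding good_curve_at_def by (rule conjunct1)
  from complete_curve_at_lipschitz(1)[OF assms(1) this]
  have "dW (F (\<Gamma> (\<rho> * t))) (F (\<Gamma> (- (\<rho> * t)))) = d (\<Gamma> (\<rho> * t)) (\<Gamma> (- (\<rho> * t))) / \<rho>"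
    using assms(3) unfolding isometric_embedding_def by blast
  then have dW_eq: "dW (F (\<Gamma> (\<rho> * t))) (F (\<Gamma> (\<rho> * (-t)))) = d (\<Gamma> (\<rho> * t)) (\<Gamma> (- (\<rho> * t))) / \<rho>"
    by simp
  show ?thesis
  proof (cases "t = 0")
    case True
    then show ?thesis
      using dW_eq \<open>\<rho> > 0\<close> Metric_space.nonneg[OF assms(1)] by simp
  next
    case False
    then have "0 < \<bar>\<rho> * t\<bar>" "\<bar>\<rho> * t\<bar> \<le> 1 / real k"
      using \<open>\<rho> > 0\<close> assms(6) by (simp_all add: abs_mult)
    from good_curve_at_expansion[OF assms(2,5) this]
    have "2 * \<bar>t\<bar> * (1 - \<epsilon> k) * \<rho> \<le> d (\<Gamma> (\<rho> * t)) (\<Gamma> (- (\<rho> * t)))"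
      using \<open>\<rho> > 0\<close> by (simp add: abs_mult mult_ac)
    with \<open>\<rho> > 0\<close> show ?thesis
      unfolding dW_eq by (simp add: pos_le_divide_eq)
  qed
qed

lemma rescaled_curve_near_limit:
  assumes close: "gh_close X (\<lambda>x y. d x y / \<rho>) x0 Z dZ z0 dW F g R e"
    and X: "Metric_space X d" and W: "Metric_space W dW" and "x0 \<in> X" "z0 \<in> Z"
    and F: "isometric_embedding X (\<lambda>x y. d x y / \<rho>) W dW F" and g: "isometric_embedding Z dZ W dW g"
    and \<Gamma>: "complete_curve_at X d b \<Gamma>" and "\<rho> > 0" and "d x0 b / \<rho> + \<bar>t\<bar> \<le> R"
  shows "\<exists>z'\<in>Z. dW (F (\<Gamma> (\<rho> * t))) (g z') < e \<and> dZ z0 z' \<le> d x0 b / \<rho> + \<bar>t\<bar> + 2 * e"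
proof -
  interpret X: Metric_space X d by fact
  interpret W: Metric_space W dW by fact
  define u where "u = \<Gamma> (\<rho> * t)"
  have uX: "u \<in> X" and \<Gamma>0: "\<Gamma> 0 = b"
    using complete_curve_at_lipschitz(1)[OF X \<Gamma>] \<Gamma> unfolding u_def complete_curve_at_def by auto
  have "d b u \<le> \<rho> * \<bar>t\<bar>"
    using complete_curve_at_lipschitz(2)[OF X \<Gamma>, of 0 "\<rho> * t"] \<Gamma>0 \<open>\<rho> > 0\<close> unfolding u_def
    by (simp add: abs_mult)
  moreover have "d x0 u \<le> d x0 b + d b u"
    using X.triangle[OF \<open>x0 \<in> X\<close> _ uX] complete_curve_at_lipschitz(1)[OF X \<Gamma>, of 0] \<Gamma>0 by simp
  ultimately have "d x0 u / \<rho> \<le> d x0 b / \<rho> + \<bar>t\<bar>"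
    using \<open>\<rho> > 0\<close> by (simp add: field_simps)
  then obtain z' where z': "z' \<in> Z" "dW (F u) (g z') < e"
    using gh_closeD(2)[OF close uX] \<open>d x0 b / \<rho> + \<bar>t\<bar> \<le> R\<close> by auto
  have FW: "F x \<in> W" if "x \<in> X" for x
    using F that unfolding isometric_embedding_def by auto
  have gW: "g z \<in> W" if "z \<in> Z" for z
    using g that unfolding isometric_embedding_def by auto
  have "dZ z0 z' = dW (g z0) (g z')"
    using g \<open>z0 \<in> Z\<close> z'(1) unfolding isometric_embedding_def by simp
  also have "\<dots> \<le> dW (g z0) (F x0) + dW (F x0) (F u) + dW (F u) (g z')"
    using W.triangle[OF gW FW gW, OF \<open>z0 \<in> Z\<close> \<open>x0 \<in> X\<close> z'(1)] W.triangle[OF FW FW gW, OF \<open>x0 \<in> X\<close> uX z'(1)]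
    by linarith
  also have "dW (F x0) (F u) = d x0 u / \<rho>"
    using F \<open>x0 \<in> X\<close> uX unfolding isometric_embedding_def by simp
  finally have "dZ z0 z' \<le> d x0 b / \<rho> + \<bar>t\<bar> + 2 * e"
    using gh_closeD(1)[OF close] z'(2) W.commute[of "g z0" "F x0"] \<open>d x0 u / \<rho> \<le> d x0 b / \<rho> + \<bar>t\<bar>\<close>
    by linarith
  with z' show ?thesis
    unfolding u_def by blast
qed

lemma good_curve_near_limit_point:
  assumes close: "gh_close X (\<lambda>x y. d x y / \<rho>) x0 Z dZ z0 dW F g R e"
    and X: "Metric_space X d" and W: "Metric_space W dW" and "x0 \<in> X" "z0 \<in> Z" "z \<in> Z"
    and F: "isometric_embedding X (\<lambda>x y. d x y / \<rho>) W dW F" and g: "isometric_embedding Z dZ W dW g"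
    and "\<rho> > 0" "dZ z0 z \<le> R" "A \<subseteq> X" and curves: "\<And>x. x \<in> A \<Longrightarrow> \<exists>\<Gamma>. good_curve_at X d \<epsilon> x \<Gamma>"
    and density: "\<forall>x\<in>X. d x x0 < (dZ z0 z + 2 * e) * \<rho> \<longrightarrow> (\<exists>b\<in>A. d x b < e * \<rho>)"
  shows "\<exists>b \<Gamma>. b \<in> A \<and> good_curve_at X d \<epsilon> b \<Gamma> \<and> d x0 b / \<rho> < dZ z0 z + 3 * e \<and> dW (F b) (g z) < 2 * e"
proof -
  interpret X: Metric_space X d by fact
  interpret W: Metric_space W dW by fact
  have FW: "F x \<in> W" if "x \<in> X" for x
    using F that unfolding isometric_embedding_def by auto
  have Fd: "dW (F x) (F x') = d x x' / \<rho>" if "x \<in> X" "x' \<in> X" for x x'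
    using F that unfolding isometric_embedding_def by auto
  have gW: "g z \<in> W" if "z \<in> Z" for z
    using g that unfolding isometric_embedding_def by auto
  obtain x where x: "x \<in> X" "dW (F x) (g z) < e"
    using gh_closeD(3)[OF close \<open>z \<in> Z\<close> \<open>dZ z0 z \<le> R\<close>] by blast
  have "dW (F x0) (F x) \<le> dW (F x0) (g z0) + dW (g z0) (g z) + dW (g z) (F x)"
    using W.triangle[OF FW gW FW, OF \<open>x0 \<in> X\<close> \<open>z0 \<in> Z\<close> x(1)] W.triangle[OF gW gW FW, OF \<open>z0 \<in> Z\<close> \<open>z \<in> Z\<close> x(1)]
    by linarith
  moreover have "dW (g z0) (g z) = dZ z0 z"
    using g \<open>z0 \<in> Z\<close> \<open>z \<in> Z\<close> unfolding isometric_embedding_def by simp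
  ultimately have "d x0 x / \<rho> < dZ z0 z + 2 * e"
    using gh_closeD(1)[OF close] x(2) Fd[OF \<open>x0 \<in> X\<close> x(1)] W.commute[of "g z" "F x"] by linarith
  then have "d x x0 < (dZ z0 z + 2 * e) * \<rho>"
    using \<open>\<rho> > 0\<close> X.commute by (simp add: field_simps)
  then obtain b where b: "b \<in> A" "d x b < e * \<rho>"
    using density x(1) by blast
  then have bX: "b \<in> X"
    using \<open>A \<subseteq> X\<close> by blast
  obtain \<Gamma> where "good_curve_at X d \<epsilon> b \<Gamma>"
    using curves[OF b(1)] by blast
  moreover have "d x0 b / \<rho> < dZ z0 z + 3 * e"
  proof -
    have "d x0 b \<le> d x0 x + d x b"
      using X.triangle[OF \<open>x0 \<in> X\<close> x(1) bX] .
    with \<open>d x0 x / \<rho> < dZ z0 z + 2 * e\<close> b(2) \<open>\<rho> > 0\<close> show ?thesis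
      by (simp add: field_simps)
  qed
  moreover have "dW (F b) (g z) < 2 * e"
  proof -
    have "dW (F b) (g z) \<le> dW (F b) (F x) + dW (F x) (g z)"
      using W.triangle[OF FW FW gW, OF bX x(1) \<open>z \<in> Z\<close>] .
    moreover have "dW (F b) (F x) = d x b / \<rho>"
      using Fd[OF bX x(1)] X.commute[of b x] by simp
    then have "dW (F b) (F x) < e"
      using b(2) \<open>\<rho> > 0\<close> by (simp add: pos_divide_less_eq)
    ultimately show ?thesis
      using x(2) by linarith
  qed
  ultimately show ?thesis
    using b(1) by blast
qed

lemma exists_good_curves_at_blowup_scales:
  assumes X: "Metric_space X d" and "A \<subseteq> X"
    and curves: "\<And>x. x \<in> A \<Longrightarrow> \<exists>\<Gamma>. good_curve_at X d \<epsilon> x \<Gamma>"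
    and density: "t_density_point X d A x0"
    and r_pos: "\<And>n. r n > 0" and r: "r \<longlonglongrightarrow> 0"
    and pGH: "pGH_realization X (\<lambda>n x y. d x y / r n) (\<lambda>n. x0) Z dZ z0 W dW f g"
    and "z \<in> Z"
  obtains \<phi> b \<Gamma> where "strict_mono \<phi>" and "\<And>j. b j \<in> A" and "\<And>j. good_curve_at X d \<epsilon> (b j) (\<Gamma> j)"
    and "\<And>j. gh_close X (\<lambda>x y. d x y / r (\<phi> j)) x0 Z dZ z0 dW (f (\<phi> j)) g
                (real j + dZ z0 z + 3) (1 / real (Suc j))"
    and "\<And>j. d x0 (b j) / r (\<phi> j) < dZ z0 z + 3"
    and "\<And>j. dW (f (\<phi> j) (b j)) (g z) < 2 / real (Suc j)"
    and "\<And>j. r (\<phi> j) * real (Suc j) \<le> 1 / real (Suc j)"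
proof -
  define e where "e j = 1 / real (Suc j)" for j
  define c where "c j = dZ z0 z + 2 * e j" for j
  note pGH' = pGH[unfolded pGH_realization_def]
  have W: "Metric_space W dW" and "x0 \<in> X" "z0 \<in> Z"
    and F: "\<And>n. isometric_embedding X (\<lambda>x y. d x y / r n) W dW (f n)"
    and g: "isometric_embedding Z dZ W dW g" and "proper_mspace Z dZ"
    using pGH' by auto
  have "Metric_space Z dZ"
    using \<open>proper_mspace Z dZ\<close> unfolding proper_mspace_def by blast
  then have "0 \<le> dZ z0 z"
    by (rule Metric_space.nonneg)
  have e: "0 < e j" "e j \<le> 1" for j
    unfolding e_def by (simp_all add: divide_le_eq)
  with \<open>0 \<le> dZ z0 z\<close> have c: "0 < c j" for j
    unfolding c_def using e(1)[of j] by linarith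
  define P where "P n j \<longleftrightarrow>
      gh_close X (\<lambda>x y. d x y / r n) x0 Z dZ z0 dW (f n) g (real j + dZ z0 z + 3) (e j) \<and>
      (\<forall>x\<in>X. d x x0 < c j * r n \<longrightarrow> (\<exists>b\<in>A. d x b < e j * r n)) \<and>
      r n * real (Suc j) \<le> e j" for n j
  have "\<forall>\<^sub>F n in sequentially. P n j" for j
  proof -
    note t_density_point_eventually_at_scales[OF X density \<open>A \<subseteq> X\<close> r_pos r c e(1)]
    moreover have "0 < e j / real (Suc j)"
      using e(1)[of j] by simp
    from tendstoD[OF r this]
    have "\<forall>\<^sub>F n in sequentially. r n * real (Suc j) \<le> e j"
    proof eventually_elim
      case (elim n)
      then show ?case
        using r_pos[of n] by (simp add: dist_real_def pos_less_divide_eq del: of_nat_Suc)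
    qed
    ultimately show ?thesis
      using pGH_realization_eventually_gh_close[OF pGH e(1)]
      unfolding P_def by eventually_elim blast
  qed
  then obtain \<phi> where \<phi>: "strict_mono \<phi>" and P\<phi>: "\<And>j. P (\<phi> j) j"
    using strict_mono_diagonal_eventually by metis
  have "\<exists>b \<Gamma>. b \<in> A \<and> good_curve_at X d \<epsilon> b \<Gamma> \<and> d x0 b / r (\<phi> j) < dZ z0 z + 3 * e j \<and>
           dW (f (\<phi> j) b) (g z) < 2 * e j" for j
  proof (rule good_curve_near_limit_point[OF _ X W \<open>x0 \<in> X\<close> \<open>z0 \<in> Z\<close> \<open>z \<in> Z\<close> F g r_pos _ \<open>A \<subseteq> X\<close> curves])
    show "gh_close X (\<lambda>x y. d x y / r (\<phi> j)) x0 Z dZ z0 dW (f (\<phi> j)) g (real j + dZ z0 z + 3) (e j)"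
      "\<forall>x\<in>X. d x x0 < (dZ z0 z + 2 * e j) * r (\<phi> j) \<longrightarrow> (\<exists>b\<in>A. d x b < e j * r (\<phi> j))"
      using P\<phi>[of j] unfolding P_def c_def by blast+
  qed simp
  then obtain b \<Gamma> where sel: "\<And>j. b j \<in> A \<and> good_curve_at X d \<epsilon> (b j) (\<Gamma> j) \<and>
      d x0 (b j) / r (\<phi> j) < dZ z0 z + 3 * e j \<and> dW (f (\<phi> j) (b j)) (g z) < 2 * e j"
    by metis
  show thesis
  proof (rule that[OF \<phi>])
    fix j
    show "b j \<in> A" "good_curve_at X d \<epsilon> (b j) (\<Gamma> j)"
      using sel[of j] by simp_all
    show "d x0 (b j) / r (\<phi> j) < dZ z0 z + 3"
      using sel[of j] e(2)[of j] by linarith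
    show "dW (f (\<phi> j) (b j)) (g z) < 2 / real (Suc j)"
      using sel[of j] unfolding e_def by simp
    show "gh_close X (\<lambda>x y. d x y / r (\<phi> j)) x0 Z dZ z0 dW (f (\<phi> j)) g (real j + dZ z0 z + 3) (1 / real (Suc j))"
      "r (\<phi> j) * real (Suc j) \<le> 1 / real (Suc j)"
      using P\<phi>[of j] unfolding P_def e_def by blast+
  qed
qed


lemma geodesic_limit_of_rescaled_good_curves:
  assumes X: "Metric_space X d" and r_pos: "\<And>n. r n > 0" and \<epsilon>: "\<epsilon> \<longlonglongrightarrow> 0"
    and pGH: "pGH_realization X (\<lambda>n x y. d x y / r n) (\<lambda>n. x0) Z dZ z0 W dW f g" and "z \<in> Z"
    and curves: "\<And>j. good_curve_at X d \<epsilon> (b j) (\<Gamma> j)"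
    and close: "\<And>j. gh_close X (\<lambda>x y. d x y / r (\<phi> j)) x0 Z dZ z0 dW (f (\<phi> j)) g
                  (real j + dZ z0 z + 3) (1 / real (Suc j))"
    and base: "\<And>j. d x0 (b j) / r (\<phi> j) < dZ z0 z + 3"
    and start: "\<And>j. dW (f (\<phi> j) (b j)) (g z) < 2 / real (Suc j)"
    and small: "\<And>j. r (\<phi> j) * real (Suc j) \<le> 1 / real (Suc j)"
  shows "\<exists>\<gamma> \<psi>. strict_mono \<psi> \<and> range \<gamma> \<subseteq> Z \<and> \<gamma> 0 = z \<and> (\<forall>s t. dZ (\<gamma> s) (\<gamma> t) = \<bar>s - t\<bar>) \<and>
           (\<forall>T e. e > 0 \<longrightarrow> (\<forall>\<^sub>F i in sequentially. \<forall>t\<in>{-T..T}.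
              dW (f (\<phi> (\<psi> i)) (\<Gamma> (\<psi> i) (r (\<phi> (\<psi> i)) * t))) (g (\<gamma> t)) < e))"
proof -
  note pGH' = pGH[unfolded pGH_realization_def]
  have W: "Metric_space W dW" and proper: "proper_mspace Z dZ" and "x0 \<in> X" "z0 \<in> Z"
    and F: "\<And>n. isometric_embedding X (\<lambda>x y. d x y / r n) W dW (f n)"
    and g: "isometric_embedding Z dZ W dW g"
    using pGH' by auto
  have complete: "complete_curve_at X d (b j) (\<Gamma> j)" for j
    using curves[of j] unfolding good_curve_at_def by (rule conjunct1)
  define y where "y j t = f (\<phi> j) (\<Gamma> j (r (\<phi> j) * t))" for j t
  have "\<exists>\<gamma> \<psi>. strict_mono \<psi> \<and> range \<gamma> \<subseteq> Z \<and> \<gamma> 0 = z \<and> (\<forall>s t. dZ (\<gamma> s) (\<gamma> t) = \<bar>s - t\<bar>) \<and>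
          (\<forall>T e. e > 0 \<longrightarrow> (\<forall>\<^sub>F i in sequentially. \<forall>t\<in>{-T..T}. dW (y (\<psi> i) t) (g (\<gamma> t)) < e))"
  proof (rule geodesic_limit_of_curves_near_isometric_image[OF proper W g \<open>z0 \<in> Z\<close> \<open>z \<in> Z\<close>,
        where B = "dZ z0 z + 5" and \<eta> = "\<lambda>j. 2 / real (Suc j)" and e = "\<lambda>j. \<epsilon> (Suc j)"])
    show "y j t \<in> W" for j t
      using F complete_curve_at_lipschitz(1)[OF X complete] unfolding y_def isometric_embedding_def by blast
    show "dW (y j s) (y j t) \<le> \<bar>s - t\<bar>" for j s t
      unfolding y_def by (rule rescaled_curve_lipschitz[OF X complete F r_pos])
    show "\<exists>z'\<in>Z. dW (y j t) (g z') < 2 / real (Suc j) \<and> dZ z0 z' \<le> dZ z0 z + 5 + \<bar>t\<bar>"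
      if "\<bar>t\<bar> \<le> real j" for j t
    proof -
      have "d x0 (b j) / r (\<phi> j) + \<bar>t\<bar> \<le> real j + dZ z0 z + 3"
        using base[of j] that by linarith
      from rescaled_curve_near_limit[OF close X W \<open>x0 \<in> X\<close> \<open>z0 \<in> Z\<close> F g complete r_pos this]
      obtain z' where "z' \<in> Z" "dW (y j t) (g z') < 1 / real (Suc j)"
        "dZ z0 z' \<le> d x0 (b j) / r (\<phi> j) + \<bar>t\<bar> + 2 * (1 / real (Suc j))"
        unfolding y_def by blast
      moreover have "0 < 1 / real (Suc j)" "1 / real (Suc j) \<le> 1" "2 / real (Suc j) = 2 * (1 / real (Suc j))"
        by simp_all
      ultimately show ?thesis
        using base[of j] by (intro bexI[of _ z']) linarith+
    qed
    show "2 * \<bar>t\<bar> * (1 - \<epsilon> (Suc j)) \<le> dW (y j t) (y j (-t))" if "\<bar>t\<bar> \<le> real j" for j t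
    proof -
      have "r (\<phi> j) * \<bar>t\<bar> \<le> r (\<phi> j) * real (Suc j)"
        using that r_pos[of "\<phi> j"] by (intro mult_left_mono) auto
      with small[of j] have "r (\<phi> j) * \<bar>t\<bar> \<le> 1 / real (Suc j)"
        by linarith
      from rescaled_curve_antipodal[OF X curves F r_pos _ this] show ?thesis
        unfolding y_def by simp
    qed
    show "dW (y j 0) (g z) < 2 / real (Suc j)" for j
      using start[of j] complete[of j] unfolding y_def complete_curve_at_def by simp
    show "(\<lambda>j. \<epsilon> (Suc j)) \<longlonglongrightarrow> 0"
      using LIMSEQ_Suc[OF \<epsilon>] .
    show "(\<lambda>j. 2 / real (Suc j)) \<longlonglongrightarrow> 0"
      using LIMSEQ_Suc[OF lim_const_over_n[of 2]] .
  qed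
  then show ?thesis
    unfolding y_def .
qed

theorem proposition4p2:
  fixes X :: "'a set" and d :: "'a \<Rightarrow> 'a \<Rightarrow> real"
    and \<epsilon> :: "nat \<Rightarrow> real" and A :: "'a set" and x0 :: 'a and r :: "nat \<Rightarrow> real"
    and Z :: "'b set" and dZ :: "'b \<Rightarrow> 'b \<Rightarrow> real" and z0 :: 'b
    and W :: "'c set" and dW :: "'c \<Rightarrow> 'c \<Rightarrow> real"
    and f :: "nat \<Rightarrow> 'a \<Rightarrow> 'c" and g :: "'b \<Rightarrow> 'c"
  assumes "doubling_mspace X d" and "proper_mspace X d"
    and "\<And>k. \<epsilon> k > 0" and "\<epsilon> \<longlonglongrightarrow> 0"
    and "A \<subseteq> X"
    and "\<And>x. x \<in> A \<Longrightarrow> \<exists>\<Gamma>. good_curve_at X d \<epsilon> x \<Gamma>"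
    and "t_density_point X d A x0"
    and "\<And>n. r n > 0" and "r \<longlonglongrightarrow> 0"
    and "pGH_realization X (\<lambda>n x y. d x y / r n) (\<lambda>n. x0) Z dZ z0 W dW f g"
  shows "\<forall>z\<in>Z. \<exists>\<gamma> :: real \<Rightarrow> 'b.
           range \<gamma> \<subseteq> Z \<and> z \<in> range \<gamma> \<and>
           (\<forall>s t. dZ (\<gamma> s) (\<gamma> t) = \<bar>s - t\<bar>) \<and>
           (\<exists>\<phi> :: nat \<Rightarrow> nat. \<exists>\<Gamma> :: nat \<Rightarrow> real \<Rightarrow> 'a. \<exists>a :: nat \<Rightarrow> 'a.
              strict_mono \<phi> \<and>
              (\<forall>j. a j \<in> A \<and> good_curve_at X d \<epsilon> (a j) (\<Gamma> j)) \<and>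
              (\<forall>T>0. \<forall>e>0. \<forall>\<^sub>F j in sequentially. \<forall>t\<in>{-T..T}.
                 dW (f (\<phi> j) (\<Gamma> j (r (\<phi> j) * t))) (g (\<gamma> t)) < e))"
proof
  fix z
  assume "z \<in> Z"
  have X: "Metric_space X d"
    using assms(2) unfolding proper_mspace_def by blast
  obtain \<phi> b \<Gamma> where \<phi>: "strict_mono \<phi>" and A: "\<And>j. b j \<in> A"
    and curves: "\<And>j. good_curve_at X d \<epsilon> (b j) (\<Gamma> j)"
    and data: "\<And>j. gh_close X (\<lambda>x y. d x y / r (\<phi> j)) x0 Z dZ z0 dW (f (\<phi> j)) g
                   (real j + dZ z0 z + 3) (1 / real (Suc j))"
      "\<And>j. d x0 (b j) / r (\<phi> j) < dZ z0 z + 3" "\<And>j. dW (f (\<phi> j) (b j)) (g z) < 2 / real (Suc j)"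
      "\<And>j. r (\<phi> j) * real (Suc j) \<le> 1 / real (Suc j)"
    using exists_good_curves_at_blowup_scales[OF X assms(5-10) \<open>z \<in> Z\<close>] by blast
  obtain \<gamma> \<psi> where \<psi>: "strict_mono \<psi>" and "range \<gamma> \<subseteq> Z" "\<gamma> 0 = z"
    and "\<forall>s t. dZ (\<gamma> s) (\<gamma> t) = \<bar>s - t\<bar>"
    and "\<forall>T e. e > 0 \<longrightarrow> (\<forall>\<^sub>F i in sequentially. \<forall>t\<in>{-T..T}.
           dW (f (\<phi> (\<psi> i)) (\<Gamma> (\<psi> i) (r (\<phi> (\<psi> i)) * t))) (g (\<gamma> t)) < e)"
    using geodesic_limit_of_rescaled_good_curves[OF X assms(8,4,10) \<open>z \<in> Z\<close> curves data] by blast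
  moreover have "strict_mono (\<phi> \<circ> \<psi>)"
    using \<phi> \<psi> by (rule strict_mono_o)
  ultimately show "\<exists>\<gamma>. range \<gamma> \<subseteq> Z \<and> z \<in> range \<gamma> \<and> (\<forall>s t. dZ (\<gamma> s) (\<gamma> t) = \<bar>s - t\<bar>) \<and>
      (\<exists>\<phi> \<Gamma> a. strict_mono \<phi> \<and> (\<forall>j. a j \<in> A \<and> good_curve_at X d \<epsilon> (a j) (\<Gamma> j)) \<and>
         (\<forall>T>0. \<forall>e>0. \<forall>\<^sub>F j in sequentially. \<forall>t\<in>{-T..T}.
            dW (f (\<phi> j) (\<Gamma> j (r (\<phi> j) * t))) (g (\<gamma> t)) < e))"
    using A curves
    by (intro exI[of _ \<gamma>] conjI exI[of _ "\<phi> \<circ> \<psi>"] exI[of _ "\<Gamma> \<circ> \<psi>"] exI[of _ "b \<circ> \<psi>"]) auto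
qed

end
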